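(* Let $f:\mathbb{R}^n\to\mathbb{R}$ be bounded below and twice continuously differentiable with $\nabla^2 f$ Lipschitz with constant $L_{\nabla^2 f}$. Let $x\in\mathbb{R}^n$, $\Delta>0$, $p=(n+1)(n+2)/2$ and points $y_1,\ldots,y_p$ with $\|y_i-x\|\le\beta\Delta$ for some $\beta>0$ and all $i$. Let $\hat Q\in\mathbb{R}^{p\times p}$ have $i$-th row $\phi(\hat s_i)^T$ with $\hat s_i=(y_i-x)/\Delta$, and assume $\hat Q$ is invertible. Let $c\in\mathbb{R}$, $g\in\mathbb{R}^n$, $H\in\mathbb{R}^{n\times n}$ symmetric be defined by $\hat Q\begin{bmatrix}c\\ \Delta g\\ \Delta^2\,\mathrm{upper}(H)\end{bmatrix}=\begin{bmatrix}f(y_1)\\ \vdots\\ f(y_p)\end{bmatrix}$, and $m(y)=c+g^T(y-x)+\tfrac12(y-x)^TH(y-x)$. Then for all $y\in B(x,\Delta)$: $|m(y)-f(y)|\le\kappa_{\mathrm{mf}}\Delta^3$, $\|\nabla m(y)-\nabla f(y)\|\le\kappa_{\mathrm{mg}}\Delta^2$ and $\|\nabla^2m(y)-\nabla^2f(y)\|\le\kappa_{\mathrm{mh}}\Delta$, where, with $A:=L_{\nabla^2 f}\left(n+\sqrt n+\tfrac32\right)\beta^3\|\hat Q^{-1}\|_\infty$, $$\kappa_{\mathrm{mf}}=\tfrac16A+\tfrac{L_{\nabla^2 f}}{6},\quad\kappa_{\mathrm{mg}}=\tfrac{17}{3}A+\tfrac{L_{\nabla^2 f}}{2},\quad\kappa_{\mathrm{mh}}=4A+L_{\nabla^2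 f}.$$
   Context: $\phi:\mathbb{R}^n\to\mathbb{R}^p$ is the natural quadratic basis $\phi(z)=[1,z_1,\ldots,z_n,\tfrac12z_1^2,z_1z_2,\ldots,z_1z_n,\tfrac12z_2^2,z_2z_3,\ldots,z_{n-1}z_n,\tfrac12z_n^2]^T$, and $\mathrm{upper}(H)=[H_{1,1},H_{1,2},\ldots,H_{1,n},H_{2,2},H_{2,3},\ldots,H_{n-1,n},H_{n,n}]^T$, so that $m(y)=\phi(y-x)^T[c;g;\mathrm{upper}(H)]$. $\|A\|_\infty$ is the maximum absolute row sum; other norms Euclidean/operator 2-norm; $B(x,\Delta)=\{y:\|y-x\|\le\Delta\}$. *)

theory Defs
  imports "HOL-Analysis.Analysis"
begin

text \<open>Coordinates of R^n are indexed by a finite linearly ordered type 'n;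
  the order plays the role of the index order 1,...,n.\<close>

definition coords :: "('n::{finite,linorder}) list" where
  "coords = sorted_list_of_set UNIV"

definition qpairs :: "(('n::{finite,linorder}) \<times> 'n) list" where
  "qpairs = concat (map (\<lambda>i. map (\<lambda>j. (i, j)) (filter (\<lambda>j. i \<le> j) coords)) coords)"

definition phi :: "(real, 'n::{finite,linorder}) vec \<Rightarrow> real list" where
  "phi z = [1] @ map (\<lambda>i. z $ i) coords
     @ map (\<lambda>(i, j). if i = j then z $ i ^ 2 / 2 else z $ i * z $ j) qpairs"

definition upper :: "((real, 'n::{finite,linorder}) vec, 'n) vec \<Rightarrow> real list" where
  "upper H = map (\<lambda>(i, j). H $ i $ j) qpairs"

text \<open>p x p matrices represented as functions on indices 0..p-1.\<close>
definition is_inverse_mat :: "nat \<Rightarrow> (nat \<Rightarrow> nat \<Rightarrow> real) \<Rightarrow> (nat \<Rightarrow> nat \<Rightarrow> real) \<Rightarrow> bool" where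
  "is_inverse_mat p A B \<longleftrightarrow>
     (\<forall>i<p. \<forall>j<p. (\<Sum>k<p. A i k * B k j) = (if i = j then 1 else 0)) \<and>
     (\<forall>i<p. \<forall>j<p. (\<Sum>k<p. B i k * A k j) = (if i = j then 1 else 0))"

definition invertible_mat_p :: "nat \<Rightarrow> (nat \<Rightarrow> nat \<Rightarrow> real) \<Rightarrow> bool" where
  "invertible_mat_p p A \<longleftrightarrow> (\<exists>B. is_inverse_mat p A B)"

definition inv_mat_p :: "nat \<Rightarrow> (nat \<Rightarrow> nat \<Rightarrow> real) \<Rightarrow> (nat \<Rightarrow> nat \<Rightarrow> real)" where
  "inv_mat_p p A = (SOME B. is_inverse_mat p A B)"

definition norm_inf_p :: "nat \<Rightarrow> (nat \<Rightarrow> nat \<Rightarrow> real) \<Rightarrow> real" where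
  "norm_inf_p p A = Max ((\<lambda>i. \<Sum>j<p. \<bar>A i j\<bar>) ` {..<p})"

definition opnorm :: "real ^ 'n ^ 'n \<Rightarrow> real" where
  "opnorm A = onorm (\<lambda>v. A *v v)"

end

(* Subtracting the second-order Taylor polynomial of f at x from the model turns the
   interpolation conditions into a linear system for the coefficient errors
   e = [c - f x; Delta (g - grad f x); Delta^2 upper (H - hess f x)].  Its matrix is Q, and its
   right-hand side consists of the Taylor remainders at the points y_i, which are at most
   L (beta Delta)^3 / 6 because the Hessian is L-Lipschitz.  Hence every entry of e is at most
   ||Q^-1||_inf L beta^3 Delta^3 / 6, which bounds the errors of c, g and H at x entrywise, and
   Taylor expansion about x carries these bounds over to all of B(x, Delta).
   Only the upper triangle of H is interpolated, so the argument needs the Hessian of f to be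
   symmetric; this follows from the Lipschitz bound by comparing the two second differences. *)

theory Submission
  imports Defs
begin

lemma has_vector_derivative_along_line:
  assumes "(F has_derivative F') (at (a + t *\<^sub>R w))"
  shows "((\<lambda>s. F (a + s *\<^sub>R w)) has_vector_derivative F' w) (at t)"
proof -
  have line: "((\<lambda>s. a + s *\<^sub>R w) has_derivative (\<lambda>h. h *\<^sub>R w)) (at t)"
    by (auto intro!: derivative_eq_intros)
  have "linear F'" using assms by (rule has_derivative_linear)
  then show ?thesis
    using diff_chain_at[OF line assms]
    by (simp add: has_vector_derivative_def o_def linear_scale)
qed

lemma norm_diff_le_of_derivative_power_bound:
  fixes F :: "real \<Rightarrow> 'a::real_normed_vector"
  assumes "0 < T"
    and F': "\<And>t. (F has_vector_derivative F' t) (at t)"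
    and bound: "\<And>t. 0 < t \<Longrightarrow> t < T \<Longrightarrow> norm (F' t) \<le> C * t ^ k"
  shows "norm (F T - F 0) \<le> C * T ^ Suc k / Suc k"
proof -
  have "((\<lambda>t. C / Suc k * t ^ Suc k) has_vector_derivative C * t ^ k) (at t)" for t
    using DERIV_cmult[OF DERIV_pow[of "Suc k" t], of "C / Suc k"]
    by (simp add: has_real_derivative_iff_has_vector_derivative del: of_nat_Suc)
  moreover have "continuous_on {0..T} F"
    using F' by (intro continuous_at_imp_continuous_on ballI has_vector_derivative_continuous) auto
  ultimately have "norm (F T - F 0) \<le> C / Suc k * T ^ Suc k - C / Suc k * 0 ^ Suc k"
    using assms by (intro differentiable_bound_general[where f' = F']) (auto intro!: continuous_intros)
  then show ?thesis by simp
qed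

lemma eq_0_if_abs_le_linear:
  fixes d C :: real
  assumes "\<And>t. 0 < t \<Longrightarrow> \<bar>d\<bar> \<le> C * t"
  shows "d = 0"
proof -
  have "((\<lambda>t. C * t) \<longlongrightarrow> 0) (at_right 0)"
    by (auto intro!: tendsto_eq_intros)
  moreover have "\<forall>\<^sub>F t in at_right 0. \<bar>d\<bar> \<le> C * t"
    using eventually_at_right_less[of 0] by eventually_elim (rule assms)
  ultimately have "\<bar>d\<bar> \<le> 0"
    by (rule tendsto_lowerbound) simp
  then show ?thesis by simp
qed

lemma norm_matrix_vector_mult_le_opnorm: "norm (A *v v) \<le> opnorm A * norm v"
  unfolding opnorm_def by (rule onorm[OF matrix_vector_mul_bounded_linear])

lemma opnorm_nonneg: "0 \<le> opnorm A"
  unfolding opnorm_def by (rule onorm_pos_le[OF matrix_vector_mul_bounded_linear])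

lemma norm_le_sqrt_card_mult_bound:
  fixes v :: "(real, 'n::finite) vec" and b :: real
  assumes "\<And>i. \<bar>v $ i\<bar> \<le> b"
  shows "norm v \<le> sqrt CARD('n) * b"
proof -
  have "0 \<le> b" using assms[of undefined] by linarith
  have "(\<Sum>i\<in>UNIV. (v $ i)\<^sup>2) \<le> (\<Sum>i\<in>(UNIV::'n set). b\<^sup>2)"
    using assms \<open>0 \<le> b\<close> by (intro sum_mono) (metis abs_le_square_iff abs_of_nonneg)
  then have "norm v \<le> sqrt (CARD('n) * b\<^sup>2)"
    by (simp add: norm_vec_def L2_set_def)
  also have "\<dots> = sqrt CARD('n) * b"
    using \<open>0 \<le> b\<close> by (simp add: real_sqrt_mult)
  finally show ?thesis .
qed

lemma sum_abs_le_sqrt_card_mult_norm: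
  fixes v :: "(real, 'n::finite) vec"
  shows "(\<Sum>j\<in>UNIV. \<bar>v $ j\<bar>) \<le> sqrt CARD('n) * norm v"
proof -
  have "(\<Sum>j\<in>UNIV. \<bar>v $ j\<bar>) = (\<chi> j. 1) \<bullet> (\<chi> j. \<bar>v $ j\<bar>)"
    by (simp add: inner_vec_def)
  also have "\<dots> \<le> norm ((\<chi> j. 1) :: (real, 'n) vec) * norm ((\<chi> j. \<bar>v $ j\<bar>) :: (real, 'n) vec)"
    by (rule norm_cauchy_schwarz)
  also have "\<dots> = sqrt CARD('n) * norm v"
    by (simp add: norm_vec_def L2_set_def)
  finally show ?thesis .
qed

lemma opnorm_le_card_mult_entry_bound:
  fixes D :: "((real, 'n::finite) vec, 'n) vec" and b :: real
  assumes "\<And>i j. \<bar>D $ i $ j\<bar> \<le> b"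
  shows "opnorm D \<le> CARD('n) * b"
  unfolding opnorm_def
proof (rule onorm_le)
  fix v :: "(real, 'n) vec"
  have "0 \<le> b" using assms[of undefined undefined] by linarith
  have "\<bar>(D *v v) $ i\<bar> \<le> b * (sqrt CARD('n) * norm v)" for i
  proof -
    have "\<bar>(D *v v) $ i\<bar> \<le> (\<Sum>j\<in>UNIV. \<bar>D $ i $ j\<bar> * \<bar>v $ j\<bar>)"
      by (simp add: matrix_vector_mult_def abs_mult[symmetric] sum_abs)
    also have "\<dots> \<le> b * (\<Sum>j\<in>UNIV. \<bar>v $ j\<bar>)"
      using assms by (simp add: sum_distrib_left sum_mono mult_right_mono)
    also have "\<dots> \<le> b * (sqrt CARD('n) * norm v)"
      using \<open>0 \<le> b\<close> by (intro mult_left_mono sum_abs_le_sqrt_card_mult_norm)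
    finally show ?thesis .
  qed
  then have "norm (D *v v) \<le> sqrt CARD('n) * (b * (sqrt CARD('n) * norm v))"
    by (rule norm_le_sqrt_card_mult_bound)
  then show "norm (D *v v) \<le> CARD('n) * b * norm v"
    by (simp add: mult_ac)
qed

section \<open>Functions with Lipschitz continuous Hessian\<close>

locale lipschitz_hessian =
  fixes f :: "(real, 'n::finite) vec \<Rightarrow> real"
    and Df :: "(real, 'n) vec \<Rightarrow> (real, 'n) vec"
    and Hf :: "(real, 'n) vec \<Rightarrow> ((real, 'n) vec, 'n) vec"
    and L :: real
  assumes grad: "\<And>z. (f has_derivative (\<lambda>h. Df z \<bullet> h)) (at z)"
    and hess: "\<And>z. (Df has_derivative (\<lambda>h. Hf z *v h)) (at z)"
    and hess_lipschitz: "\<And>u v. opnorm (Hf u - Hf v) \<le> L * norm (u - v)"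
begin

lemma lipschitz_const_nonneg: "0 \<le> L"
  using hess_lipschitz[of "axis undefined 1" 0] opnorm_nonneg[of "Hf (axis undefined 1) - Hf 0"]
  by simp

lemma norm_hess_diff_mult_le: "norm ((Hf u - Hf v) *v w) \<le> L * norm (u - v) * norm w"
  using norm_matrix_vector_mult_le_opnorm[of "Hf u - Hf v" w] hess_lipschitz[of u v]
  by (meson mult_right_mono norm_ge_zero order_trans)

lemma gradient_taylor_bound: "norm (Df (a + w) - Df a - Hf a *v w) \<le> L / 2 * norm w ^ 2"
proof -
  define F where "F t = Df (a + t *\<^sub>R w) - t *\<^sub>R (Hf a *v w)" for t
  have "(F has_vector_derivative (Hf (a + t *\<^sub>R w) - Hf a) *v w) (at t)" for t
    unfolding F_def matrix_vector_mult_diff_rdistrib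
    using has_vector_derivative_along_line[OF hess, where a = a and t = t and w = w]
    by (auto intro!: derivative_eq_intros)
  moreover have "norm ((Hf (a + t *\<^sub>R w) - Hf a) *v w) \<le> L * norm w ^ 2 * t ^ 1" if "0 < t" for t
    using norm_hess_diff_mult_le[of "a + t *\<^sub>R w" a w] that
    by (simp add: power2_eq_square mult_ac)
  ultimately have "norm (F 1 - F 0) \<le> L * norm w ^ 2 * 1 ^ Suc 1 / Suc 1"
    by (intro norm_diff_le_of_derivative_power_bound) auto
  then show ?thesis by (simp add: F_def algebra_simps)
qed

lemma value_taylor_bound:
  "\<bar>f (a + w) - f a - Df a \<bullet> w - 1/2 * (w \<bullet> (Hf a *v w))\<bar> \<le> L / 6 * norm w ^ 3"
proof -
  define F where "F t = f (a + t *\<^sub>R w) - t * (Df a \<bullet> w) - t\<^sup>2 / 2 * (w \<bullet> (Hf a *v w))" for t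
  have "(F has_vector_derivative w \<bullet> (Df (a + t *\<^sub>R w) - Df a - Hf a *v (t *\<^sub>R w))) (at t)" for t
    unfolding F_def has_real_derivative_iff_has_vector_derivative[symmetric]
    by (auto intro!: derivative_eq_intros has_vector_derivative_along_line[OF grad,
          unfolded has_real_derivative_iff_has_vector_derivative[symmetric]]
        simp: inner_diff_right inner_commute matrix_vector_mult_scaleR)
  moreover have "norm (w \<bullet> (Df (a + t *\<^sub>R w) - Df a - Hf a *v (t *\<^sub>R w))) \<le> L / 2 * norm w ^ 3 * t ^ 2"
    if "0 < t" for t
  proof -
    have "norm (w \<bullet> (Df (a + t *\<^sub>R w) - Df a - Hf a *v (t *\<^sub>R w)))
        \<le> norm w * (L / 2 * norm (t *\<^sub>R w) ^ 2)"
      using Cauchy_Schwarz_ineq2 gradient_taylor_bound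
      by (metis mult_left_mono norm_ge_zero order_trans real_norm_def)
    then show ?thesis using that by (simp add: power2_eq_square power3_eq_cube mult_ac)
  qed
  ultimately have "norm (F 1 - F 0) \<le> L / 2 * norm w ^ 3 * 1 ^ Suc 2 / Suc 2"
    by (intro norm_diff_le_of_derivative_power_bound) auto
  then show ?thesis by (simp add: F_def algebra_simps)
qed

lemma second_difference_bound:
  assumes "0 < t"
  shows "\<bar>f (a + t *\<^sub>R v + t *\<^sub>R u) - f (a + t *\<^sub>R u) - f (a + t *\<^sub>R v) + f a
           - t\<^sup>2 * (u \<bullet> (Hf a *v v))\<bar>
         \<le> norm u * (L / 2 * norm v ^ 2 + L * norm u * norm v) * t ^ 3"
proof -
  define K where "K = norm u * (L / 2 * norm v ^ 2 + L * norm u * norm v)"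
  define F where "F b = f (a + t *\<^sub>R v + b *\<^sub>R u) - f (a + b *\<^sub>R u) - b * t * (u \<bullet> (Hf a *v v))" for b
  define F' where "F' b = u \<bullet> (Df ((a + b *\<^sub>R u) + t *\<^sub>R v) - Df (a + b *\<^sub>R u)
      - Hf (a + b *\<^sub>R u) *v (t *\<^sub>R v)) + u \<bullet> ((Hf (a + b *\<^sub>R u) - Hf a) *v (t *\<^sub>R v))" for b
  have "(F has_vector_derivative F' b) (at b)" for b
    using has_vector_derivative_along_line[OF grad, where a = "a + t *\<^sub>R v" and t = b and w = u]
      has_vector_derivative_along_line[OF grad, where a = a and t = b and w = u]
    unfolding F_def F'_def has_real_derivative_iff_has_vector_derivative[symmetric]
    by (auto intro!: derivative_eq_intros simp: inner_diff_right inner_commute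
        matrix_vector_mult_scaleR matrix_vector_mult_diff_rdistrib algebra_simps)
  moreover have "norm (F' b) \<le> K * t\<^sup>2 * b ^ 0" if "0 < b" "b < t" for b
  proof -
    have "norm (F' b) \<le> norm u * norm (Df ((a + b *\<^sub>R u) + t *\<^sub>R v) - Df (a + b *\<^sub>R u)
          - Hf (a + b *\<^sub>R u) *v (t *\<^sub>R v)) + norm u * norm ((Hf (a + b *\<^sub>R u) - Hf a) *v (t *\<^sub>R v))"
      unfolding F'_def real_norm_def
      by (rule order_trans[OF abs_triangle_ineq add_mono[OF Cauchy_Schwarz_ineq2 Cauchy_Schwarz_ineq2]])
    also have "\<dots> \<le> norm u * (L / 2 * norm (t *\<^sub>R v) ^ 2)
        + norm u * (L * norm (b *\<^sub>R u) * norm (t *\<^sub>R v))"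
      using norm_hess_diff_mult_le[of "a + b *\<^sub>R u" a "t *\<^sub>R v"]
      by (intro add_mono mult_left_mono gradient_taylor_bound) simp_all
    also have "\<dots> \<le> K * t\<^sup>2"
      using that lipschitz_const_nonneg
      by (simp add: K_def power2_eq_square algebra_simps mult_left_mono mult_right_mono)
    finally show ?thesis by simp
  qed
  ultimately have "norm (F t - F 0) \<le> K * t\<^sup>2 * t ^ Suc 0 / Suc 0"
    using assms by (intro norm_diff_le_of_derivative_power_bound) auto
  then show ?thesis
    by (simp add: F_def K_def power2_eq_square power3_eq_cube algebra_simps)
qed

lemma hess_symmetric: "transpose (Hf a) = Hf a"
proof -
  have inner_symmetric: "u \<bullet> (Hf a *v v) = v \<bullet> (Hf a *v u)" for u v
  proof -
    define C where "C = norm u * (L / 2 * norm v ^ 2 + L * norm u * norm v)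
      + norm v * (L / 2 * norm u ^ 2 + L * norm v * norm u)"
    have "\<bar>u \<bullet> (Hf a *v v) - v \<bullet> (Hf a *v u)\<bar> \<le> C * t" if "0 < t" for t
    proof -
      have "\<bar>t\<^sup>2 * (u \<bullet> (Hf a *v v)) - t\<^sup>2 * (v \<bullet> (Hf a *v u))\<bar> \<le> C * t ^ 3"
        using second_difference_bound[OF that, where a = a and u = u and v = v]
          second_difference_bound[OF that, where a = a and u = v and v = u]
        unfolding C_def distrib_right by (simp add: add_ac)
      then show ?thesis
        using that by (simp add: abs_mult power2_eq_square power3_eq_cube flip: right_diff_distrib)
    qed
    then have "u \<bullet> (Hf a *v v) - v \<bullet> (Hf a *v u) = 0"
      by (rule eq_0_if_abs_le_linear)
    then show ?thesis by simp
  qed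
  have "Hf a $ j $ i = Hf a $ i $ j" for i j
    using inner_symmetric[of "axis j 1" "axis i 1"]
    by (simp add: inner_axis' matrix_vector_mult_basis column_def)
  then show ?thesis
    by (simp add: vec_eq_iff transpose_def)
qed

context
  fixes x :: "(real, 'n) vec" and c :: real and g :: "(real, 'n) vec" and H :: "((real, 'n) vec, 'n) vec"
    and \<epsilon> \<Delta> :: real
  assumes value_error: "\<bar>c - f x\<bar> \<le> \<epsilon> * \<Delta> ^ 3"
    and gradient_error: "\<And>j. \<bar>(g - Df x) $ j\<bar> \<le> \<epsilon> * \<Delta>\<^sup>2"
    and hessian_error: "\<And>i j. \<bar>(H - Hf x) $ i $ j\<bar> \<le> \<epsilon> * \<Delta>"
begin

lemma opnorm_hessian_error_at_center: "opnorm (H - Hf x) \<le> CARD('n) * (\<epsilon> * \<Delta>)"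
  using hessian_error by (rule opnorm_le_card_mult_entry_bound)

lemma quadratic_model_hessian_error:
  assumes "norm s \<le> \<Delta>"
  shows "opnorm (H - Hf (x + s)) \<le> (CARD('n) * \<epsilon> + L) * \<Delta>"
  unfolding opnorm_def
proof (rule onorm_le)
  fix v
  have "(H - Hf (x + s)) *v v = (H - Hf x) *v v + (Hf x - Hf (x + s)) *v v"
    by (simp add: matrix_vector_mult_diff_rdistrib)
  then have "norm ((H - Hf (x + s)) *v v) \<le> norm ((H - Hf x) *v v) + norm ((Hf x - Hf (x + s)) *v v)"
    by (simp add: norm_triangle_ineq)
  also have "norm ((H - Hf x) *v v) \<le> opnorm (H - Hf x) * norm v"
    by (rule norm_matrix_vector_mult_le_opnorm)
  also have "\<dots> \<le> CARD('n) * (\<epsilon> * \<Delta>) * norm v"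
    using opnorm_hessian_error_at_center by (rule mult_right_mono) simp
  also have "norm ((Hf x - Hf (x + s)) *v v) \<le> L * norm s * norm v"
    using norm_hess_diff_mult_le[of x "x + s" v] by simp
  also have "\<dots> \<le> L * \<Delta> * norm v"
    using assms lipschitz_const_nonneg by (intro mult_right_mono mult_left_mono) simp_all
  finally show "norm ((H - Hf (x + s)) *v v) \<le> (CARD('n) * \<epsilon> + L) * \<Delta> * norm v"
    by (simp add: algebra_simps)
qed

lemma norm_gradient_error_at_center: "norm (g - Df x) \<le> sqrt CARD('n) * (\<epsilon> * \<Delta>\<^sup>2)"
  using gradient_error by (rule norm_le_sqrt_card_mult_bound)

lemma quadratic_model_gradient_error:
  assumes "norm s \<le> \<Delta>"
  shows "norm (g + H *v s - Df (x + s)) \<le> ((sqrt CARD('n) + CARD('n)) * \<epsilon> + L / 2) * \<Delta>\<^sup>2"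
proof -
  have "0 \<le> \<epsilon> * \<Delta>" using hessian_error[of undefined undefined] by linarith
  have "g + H *v s - Df (x + s) = (g - Df x) + (H - Hf x) *v s - (Df (x + s) - Df x - Hf x *v s)"
    by (simp add: matrix_vector_mult_diff_rdistrib algebra_simps)
  then have "norm (g + H *v s - Df (x + s))
      \<le> norm (g - Df x) + norm ((H - Hf x) *v s) + norm (Df (x + s) - Df x - Hf x *v s)"
    using order_trans[OF norm_triangle_ineq4 add_right_mono[OF norm_triangle_ineq]] by metis
  also have "norm ((H - Hf x) *v s) \<le> opnorm (H - Hf x) * norm s"
    by (rule norm_matrix_vector_mult_le_opnorm)
  also have "\<dots> \<le> CARD('n) * (\<epsilon> * \<Delta>) * \<Delta>"
    using opnorm_hessian_error_at_center assms \<open>0 \<le> \<epsilon> * \<Delta>\<close> by (intro mult_mono) simp_all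
  also have "norm (Df (x + s) - Df x - Hf x *v s) \<le> L / 2 * norm s ^ 2"
    by (rule gradient_taylor_bound)
  also have "\<dots> \<le> L / 2 * \<Delta>\<^sup>2"
    using assms lipschitz_const_nonneg by (intro mult_left_mono power_mono) simp_all
  finally show ?thesis
    using norm_gradient_error_at_center by (simp add: power2_eq_square algebra_simps)
qed

lemma quadratic_model_value_error:
  assumes "norm s \<le> \<Delta>"
  shows "\<bar>c + g \<bullet> s + 1/2 * (s \<bullet> (H *v s)) - f (x + s)\<bar>
    \<le> ((1 + sqrt CARD('n) + CARD('n) / 2) * \<epsilon> + L / 6) * \<Delta> ^ 3"
proof -
  have "0 \<le> \<epsilon> * \<Delta>" using hessian_error[of undefined undefined] by linarith
  have "0 \<le> \<Delta>" using assms norm_ge_zero order_trans by blast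
  define T where "T = f (x + s) - f x - Df x \<bullet> s - 1/2 * (s \<bullet> (Hf x *v s))"
  have "c + g \<bullet> s + 1/2 * (s \<bullet> (H *v s)) - f (x + s)
      = (c - f x) + (g - Df x) \<bullet> s + 1/2 * (s \<bullet> ((H - Hf x) *v s)) - T"
    by (simp add: T_def inner_diff_left inner_diff_right matrix_vector_mult_diff_rdistrib algebra_simps)
  then have "\<bar>c + g \<bullet> s + 1/2 * (s \<bullet> (H *v s)) - f (x + s)\<bar>
      \<le> \<bar>c - f x\<bar> + \<bar>(g - Df x) \<bullet> s\<bar> + 1/2 * \<bar>s \<bullet> ((H - Hf x) *v s)\<bar> + \<bar>T\<bar>"
    by linarith
  also have "\<bar>(g - Df x) \<bullet> s\<bar> \<le> norm (g - Df x) * norm s"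
    by (rule Cauchy_Schwarz_ineq2)
  also have "\<dots> \<le> sqrt CARD('n) * (\<epsilon> * \<Delta>\<^sup>2) * \<Delta>"
    using norm_gradient_error_at_center assms order_trans[OF norm_ge_zero norm_gradient_error_at_center]
    by (intro mult_mono) simp_all
  also have "\<bar>s \<bullet> ((H - Hf x) *v s)\<bar> \<le> norm s * (opnorm (H - Hf x) * norm s)"
    using Cauchy_Schwarz_ineq2 norm_matrix_vector_mult_le_opnorm
    by (rule order_trans[OF _ mult_left_mono]) simp
  also have "\<dots> \<le> \<Delta> * (CARD('n) * (\<epsilon> * \<Delta>) * \<Delta>)"
    using opnorm_hessian_error_at_center assms \<open>0 \<le> \<epsilon> * \<Delta>\<close> \<open>0 \<le> \<Delta>\<close> opnorm_nonneg[of "H - Hf x"]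
    by (intro mult_mono) simp_all
  also have "\<bar>T\<bar> \<le> L / 6 * norm s ^ 3"
    unfolding T_def by (rule value_taylor_bound)
  also have "\<dots> \<le> L / 6 * \<Delta> ^ 3"
    using assms lipschitz_const_nonneg by (intro mult_left_mono power_mono) simp_all
  finally show ?thesis
    using value_error by (simp add: power2_eq_square power3_eq_cube algebra_simps)
qed

end

end

section \<open>The natural quadratic basis\<close>

lemma set_coords: "set (coords :: 'n::{finite,linorder} list) = UNIV"
  and distinct_coords: "distinct (coords :: 'n list)"
  and length_coords: "length (coords :: 'n list) = CARD('n)"
  by (simp_all add: coords_def)

lemma set_qpairs: "set (qpairs :: ('n::{finite,linorder} \<times> 'n) list) = {(i, j). i \<le> j}"
  by (auto simp: qpairs_def set_coords)

lemma distinct_qpairs: "distinct (qpairs :: ('n::{finite,linorder} \<times> 'n) list)"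
proof -
  define row where "row i = map (Pair i) (filter ((\<le>) i) (coords :: 'n list))" for i
  have diag: "(i, i) \<in> set (row i)" for i
    by (simp add: row_def set_coords)
  have "inj row"
    by (rule injI) (metis diag fst_conv imageE list.set_map row_def)
  moreover have "removeAll [] (map row coords) = map row coords"
    using diag by (intro removeAll_id) (metis empty_iff empty_set imageE list.set_map)
  ultimately have "distinct (removeAll [] (map row coords))"
    by (simp add: distinct_map distinct_coords inj_on_subset[of row UNIV])
  moreover have "distinct (row i)" for i
    by (simp add: row_def distinct_map distinct_coords inj_on_def)
  moreover have "set (row i) \<inter> set (row i') = {}" if "row i \<noteq> row i'" for i i'
    using that by (auto simp: row_def)
  ultimately show ?thesis
    unfolding qpairs_def row_def[symmetric] distinct_concat_iff by auto
qed

lemma sum_upper_lower_triangle: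
  fixes h :: "'n::{finite,linorder} \<times> 'n \<Rightarrow> 'a::comm_monoid_add"
  shows "sum h {(i, j). i \<le> j} + sum h {(i, j). j \<le> i} = sum h UNIV + sum h {(i, j). i = j}"
proof -
  have "{(i::'n, j). i \<le> j} \<union> {(i, j). j \<le> i} = UNIV"
    and "{(i::'n, j). i \<le> j} \<inter> {(i, j). j \<le> i} = {(i, j). i = j}"
    by auto
  then show ?thesis by (metis finite sum.union_inter)
qed

lemma sum_lower_triangle_swap:
  fixes h :: "'n::{finite,linorder} \<times> 'n \<Rightarrow> 'a::comm_monoid_add"
  shows "sum h {(i, j). j \<le> i} = sum (h \<circ> prod.swap) {(i, j). i \<le> j}"
  by (rule sum.reindex_bij_witness[where i = prod.swap and j = prod.swap]) auto

lemma card_diagonal: "card {(i::'n::finite, j). i = j} = CARD('n)"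
proof -
  have "{(i::'n, j). i = j} = (\<lambda>i. (i, i)) ` UNIV" by auto
  then show ?thesis by (simp add: card_image inj_on_def)
qed

lemma length_qpairs:
  "2 * length (qpairs :: ('n::{finite,linorder} \<times> 'n) list) = CARD('n) * CARD('n) + CARD('n)"
  using sum_upper_lower_triangle[of "\<lambda>_::'n \<times> 'n. 1::nat"]
    sum_lower_triangle_swap[of "\<lambda>_::'n \<times> 'n. 1::nat"]
  by (simp add: distinct_card[OF distinct_qpairs, symmetric] set_qpairs card_diagonal
      card_cartesian_product UNIV_Times_UNIV[symmetric] o_def del: UNIV_Times_UNIV)

lemma length_phi:
  "length (phi (z :: (real, 'n::{finite,linorder}) vec)) = (CARD('n) + 1) * (CARD('n) + 2) div 2"
proof -
  have "2 * length (phi z) = (CARD('n) + 1) * (CARD('n) + 2)"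
    using length_qpairs[where 'n = 'n] by (simp add: phi_def length_coords algebra_simps)
  then show ?thesis by simp
qed

lemma sum_upper_triangle_halved_diagonal:
  fixes h :: "'n::{finite,linorder} \<times> 'n \<Rightarrow> real"
  assumes "\<And>i j. h (i, j) = h (j, i)"
  shows "(\<Sum>(i, j)\<in>{(i, j). i \<le> j}. if i = j then h (i, j) / 2 else h (i, j)) = sum h UNIV / 2"
proof -
  define w where "w = (\<lambda>(i::'n, j). if i = j then h (i, j) / 2 else h (i, j))"
  have "sum w {(i, j). j \<le> i} = sum w {(i, j). i \<le> j}"
    unfolding sum_lower_triangle_swap using assms by (intro sum.cong) (auto simp: w_def)
  then have "2 * sum w {(i, j). i \<le> j} = sum w {(i, j). i \<le> j} + sum w {(i, j). j \<le> i}"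
    by simp
  also have "\<dots> = sum w UNIV + sum w {(i, j). i = j}"
    by (rule sum_upper_lower_triangle)
  also have "sum w {(i, j). i = j} = (\<Sum>q\<in>UNIV. if q \<in> {(i, j). i = j} then w q else 0)"
    using sum.inter_restrict[of UNIV w "{(i, j). i = j}"] by simp
  also have "sum w UNIV + \<dots> = sum h UNIV"
    unfolding sum.distrib[symmetric] by (intro sum.cong) (auto simp: w_def)
  finally show ?thesis by (simp add: w_def)
qed

definition quad_coeffs ::
    "real \<Rightarrow> real \<Rightarrow> (real, 'n::{finite,linorder}) vec \<Rightarrow> ((real, 'n) vec, 'n) vec \<Rightarrow> real list"
  where "quad_coeffs \<Delta> c g H = [c] @ map (\<lambda>j. \<Delta> * g $ j) coords @ map (\<lambda>h. \<Delta>\<^sup>2 * h) (upper H)"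

lemma length_quad_coeffs:
  "length (quad_coeffs \<Delta> c (g :: (real, 'n::{finite,linorder}) vec) H) = length (phi (z :: (real, 'n) vec))"
  by (simp add: quad_coeffs_def phi_def upper_def)

lemma sum_nth_mult_eq_sum_list_map2:
  "length xs = length ys \<Longrightarrow> (\<Sum>k<length xs. xs ! k * ys ! k) = sum_list (map2 (*) xs ys)"
  by (simp add: sum_list_sum_nth atLeast0LessThan)

lemma phi_inner_quad_coeffs:
  fixes z :: "(real, 'n::{finite,linorder}) vec"
  assumes "transpose H = H"
  shows "(\<Sum>k<length (phi z). phi z ! k * quad_coeffs \<Delta> c g H ! k)
    = c + g \<bullet> (\<Delta> *\<^sub>R z) + 1/2 * ((\<Delta> *\<^sub>R z) \<bullet> (H *v (\<Delta> *\<^sub>R z)))"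
proof -
  define h where "h = (\<lambda>(i, j). (\<Delta> * z $ i) * H $ i $ j * (\<Delta> * z $ j))"
  have h_sym: "h (i, j) = h (j, i)" for i j
    using arg_cong[OF assms, of "\<lambda>A. A $ i $ j"] by (simp add: h_def transpose_def mult_ac)
  have "(\<Sum>k<length (phi z). phi z ! k * quad_coeffs \<Delta> c g H ! k)
      = c + (\<Sum>j\<leftarrow>coords. z $ j * (\<Delta> * g $ j))
          + (\<Sum>(i, j)\<leftarrow>qpairs. (if i = j then z $ i ^ 2 / 2 else z $ i * z $ j) * (\<Delta>\<^sup>2 * H $ i $ j))"
    unfolding sum_nth_mult_eq_sum_list_map2[OF length_quad_coeffs[symmetric]]
    by (simp add: phi_def quad_coeffs_def upper_def zip_map_map zip_same_conv_map o_def split_def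
        cong: if_cong)
  also have "(\<Sum>j\<leftarrow>coords. z $ j * (\<Delta> * g $ j)) = g \<bullet> (\<Delta> *\<^sub>R z)"
    by (simp add: sum_list_distinct_conv_sum_set distinct_coords set_coords inner_vec_def mult_ac)
  also have "(\<Sum>(i, j)\<leftarrow>qpairs. (if i = j then z $ i ^ 2 / 2 else z $ i * z $ j) * (\<Delta>\<^sup>2 * H $ i $ j))
      = (\<Sum>(i, j)\<in>{(i, j). i \<le> j}. if i = j then h (i, j) / 2 else h (i, j))"
    by (simp add: sum_list_distinct_conv_sum_set distinct_qpairs set_qpairs[symmetric])
      (intro sum.cong, auto simp: h_def power2_eq_square mult_ac)
  also have "\<dots> = sum h UNIV / 2"
    using h_sym by (rule sum_upper_triangle_halved_diagonal)
  also have "sum h UNIV = (\<Delta> *\<^sub>R z) \<bullet> (H *v (\<Delta> *\<^sub>R z))"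
    by (simp add: h_def inner_vec_def matrix_vector_mult_def sum_distrib_left
        UNIV_Times_UNIV[symmetric] sum.cartesian_product[symmetric] mult_ac del: UNIV_Times_UNIV)
  finally show ?thesis by simp
qed

lemma quad_coeffs_entry_bounds:
  fixes g :: "(real, 'n::{finite,linorder}) vec"
  assumes "transpose H = H"
    and bound: "\<And>v. v \<in> set (quad_coeffs \<Delta> c g H) \<Longrightarrow> \<bar>v\<bar> \<le> E"
  shows "\<bar>c\<bar> \<le> E" and "\<bar>\<Delta> * g $ j\<bar> \<le> E" and "\<bar>\<Delta>\<^sup>2 * H $ i $ j\<bar> \<le> E"
proof -
  show "\<bar>c\<bar> \<le> E" "\<bar>\<Delta> * g $ j\<bar> \<le> E"
    using bound by (auto simp: quad_coeffs_def set_coords)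
  have "\<bar>\<Delta>\<^sup>2 * H $ i $ j\<bar> \<le> E" if "i \<le> j" for i j
    using that by (intro bound) (force simp: quad_coeffs_def upper_def set_qpairs)
  moreover have "H $ i $ j = H $ j $ i"
    using arg_cong[OF assms(1), of "\<lambda>A. A $ i $ j"] by (simp add: transpose_def)
  ultimately show "\<bar>\<Delta>\<^sup>2 * H $ i $ j\<bar> \<le> E"
    by (metis linear)
qed

section \<open>Interpolation error\<close>

lemma abs_le_norm_inf_inverse_mult:
  assumes inv: "is_inverse_mat p Q B"
    and solves: "\<And>i. i < p \<Longrightarrow> (\<Sum>l<p. Q i l * e l) = r i"
    and r_bound: "\<And>i. i < p \<Longrightarrow> \<bar>r i\<bar> \<le> R"
    and "k < p"
  shows "\<bar>e k\<bar> \<le> norm_inf_p p B * R"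
proof -
  have left_inverse: "(\<Sum>l<p. B k l * Q l m) = (if k = m then 1 else 0)" if "m < p" for m
    using inv \<open>k < p\<close> that by (simp add: is_inverse_mat_def)
  have "e k = (\<Sum>m<p. if k = m then e m else 0)"
    using \<open>k < p\<close> by simp
  also have "\<dots> = (\<Sum>m<p. (\<Sum>l<p. B k l * Q l m) * e m)"
    using left_inverse by (intro sum.cong) auto
  also have "\<dots> = (\<Sum>l<p. B k l * (\<Sum>m<p. Q l m * e m))"
    by (simp add: sum_distrib_left sum_distrib_right mult_ac) (rule sum.swap)
  also have "\<dots> = (\<Sum>l<p. B k l * r l)"
    using solves by simp
  finally have "\<bar>e k\<bar> \<le> (\<Sum>l<p. \<bar>B k l\<bar> * \<bar>r l\<bar>)"
    by (simp add: sum_abs abs_mult[symmetric])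
  also have "\<dots> \<le> (\<Sum>l<p. \<bar>B k l\<bar>) * R"
    unfolding sum_distrib_right using r_bound by (intro sum_mono mult_left_mono) auto
  also have "\<dots> \<le> norm_inf_p p B * R"
    using \<open>k < p\<close> r_bound[OF \<open>k < p\<close>]
    by (intro mult_right_mono) (auto simp: norm_inf_p_def intro!: Max_ge)
  finally show ?thesis .
qed

lemma norm_inf_p_nonneg: "0 < p \<Longrightarrow> 0 \<le> norm_inf_p p B"
  unfolding norm_inf_p_def
  by (rule order_trans[OF _ Max_ge[of _ "\<Sum>j<p. \<bar>B 0 j\<bar>"]]) (auto intro: sum_nonneg)

lemma interpolation_coeffs_error:
  fixes f :: "(real, 'n::{finite,linorder}) vec \<Rightarrow> real"
    and x :: "(real, 'n) vec" and y :: "nat \<Rightarrow> (real, 'n) vec"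
    and \<Delta> :: real
  defines "Q \<equiv> \<lambda>i k. phi ((1 / \<Delta>) *\<^sub>R (y i - x)) ! k"
  assumes "lipschitz_hessian f Df Hf L"
    and "0 < \<Delta>" and H_sym: "transpose H = H"
    and p_def: "p = (CARD('n) + 1) * (CARD('n) + 2) div 2"
    and inv: "is_inverse_mat p Q B"
    and y_close: "\<And>i. i < p \<Longrightarrow> norm (y i - x) \<le> \<beta> * \<Delta>"
    and interp: "\<And>i. i < p \<Longrightarrow> (\<Sum>k<p. Q i k * quad_coeffs \<Delta> c g H ! k) = f (y i)"
  defines "\<epsilon> \<equiv> norm_inf_p p B * L * \<beta> ^ 3 / 6"
  shows "\<bar>c - f x\<bar> \<le> \<epsilon> * \<Delta> ^ 3"
    and "\<bar>(g - Df x) $ j\<bar> \<le> \<epsilon> * \<Delta>\<^sup>2"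
    and "\<bar>(H - Hf x) $ i $ j\<bar> \<le> \<epsilon> * \<Delta>"
proof -
  interpret lipschitz_hessian f Df Hf L by fact
  define e where "e = quad_coeffs \<Delta> (c - f x) (g - Df x) (H - Hf x)"
  define r where "r i = f (y i) - f x - Df x \<bullet> (y i - x) - 1/2 * ((y i - x) \<bullet> (Hf x *v (y i - x)))" for i
  have p_length: "p = length (phi z)" for z :: "(real, 'n) vec"
    by (simp add: p_def length_phi)
  have error_sym: "transpose (H - Hf x) = H - Hf x"
    using H_sym hess_symmetric[of x] by (simp add: transpose_def vec_eq_iff)
  have rescale: "\<Delta> *\<^sub>R ((1 / \<Delta>) *\<^sub>R w) = w" for w :: "(real, 'n) vec"
    using \<open>0 < \<Delta>\<close> by simp
  have "(\<Sum>k<p. Q i k * e ! k) = r i" if "i < p" for i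
  proof -
    define s where "s = y i - x"
    have "(\<Sum>k<p. Q i k * e ! k) = (c - f x) + (g - Df x) \<bullet> s + 1/2 * (s \<bullet> ((H - Hf x) *v s))"
      using phi_inner_quad_coeffs[OF error_sym, of "(1 / \<Delta>) *\<^sub>R s" \<Delta> "c - f x" "g - Df x"]
      unfolding rescale p_length[of "(1 / \<Delta>) *\<^sub>R s"] by (simp add: Q_def e_def s_def)
    moreover have "f (y i) = c + g \<bullet> s + 1/2 * (s \<bullet> (H *v s))"
      using interp[OF that] phi_inner_quad_coeffs[OF H_sym, of "(1 / \<Delta>) *\<^sub>R s" \<Delta> c g]
      unfolding rescale p_length[of "(1 / \<Delta>) *\<^sub>R s"] by (simp add: Q_def s_def)
    ultimately show ?thesis
      by (simp add: r_def s_def[symmetric] inner_diff_left inner_diff_right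
          matrix_vector_mult_diff_rdistrib algebra_simps)
  qed
  moreover have "\<bar>r i\<bar> \<le> L / 6 * (\<beta> * \<Delta>) ^ 3" if "i < p" for i
  proof -
    have "\<bar>r i\<bar> \<le> L / 6 * norm (y i - x) ^ 3"
      using value_taylor_bound[of x "y i - x"] by (simp add: r_def)
    also have "\<dots> \<le> L / 6 * (\<beta> * \<Delta>) ^ 3"
      using y_close[OF that] lipschitz_const_nonneg by (intro mult_left_mono power_mono) simp_all
    finally show ?thesis .
  qed
  ultimately have "\<bar>e ! k\<bar> \<le> \<epsilon> * \<Delta> ^ 3" if "k < p" for k
    using abs_le_norm_inf_inverse_mult[OF inv, where e = "(!) e" and R = "L / 6 * (\<beta> * \<Delta>) ^ 3",
        OF _ _ that]
    by (simp add: \<epsilon>_def power_mult_distrib mult_ac)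
  then have "\<bar>v\<bar> \<le> \<epsilon> * \<Delta> ^ 3" if "v \<in> set e" for v
    using that p_length[of 0] by (metis e_def in_set_conv_nth length_quad_coeffs)
  note entry_bounds = quad_coeffs_entry_bounds[where \<Delta> = \<Delta> and c = "c - f x" and g = "g - Df x",
      OF error_sym this[unfolded e_def]]
  show "\<bar>c - f x\<bar> \<le> \<epsilon> * \<Delta> ^ 3"
    by (rule entry_bounds(1))
  show "\<bar>(g - Df x) $ j\<bar> \<le> \<epsilon> * \<Delta>\<^sup>2"
    using entry_bounds(2)[where j = j] \<open>0 < \<Delta>\<close> by (simp add: abs_mult power_eq_if mult_ac)
  show "\<bar>(H - Hf x) $ i $ j\<bar> \<le> \<epsilon> * \<Delta>"
    using entry_bounds(3)[where i = i and j = j] \<open>0 < \<Delta>\<close> by (simp add: abs_mult power_eq_if mult_ac)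
qed

lemma interpolation_model_error:
  fixes f :: "(real, 'n::{finite,linorder}) vec \<Rightarrow> real"
    and x :: "(real, 'n) vec" and y :: "nat \<Rightarrow> (real, 'n) vec"
    and \<Delta> L \<beta> :: real and p :: nat
  defines "Q \<equiv> \<lambda>i k. phi ((1 / \<Delta>) *\<^sub>R (y i - x)) ! k"
    and "\<kappa> \<equiv> (CARD('n) + sqrt CARD('n) + 3/2)
      * (norm_inf_p p (inv_mat_p p (\<lambda>i k. phi ((1 / \<Delta>) *\<^sub>R (y i - x)) ! k)) * L * \<beta> ^ 3 / 6)"
  assumes lh: "lipschitz_hessian f Df Hf L"
    and "0 < \<Delta>" and H_sym: "transpose H = H"
    and p_def: "p = (CARD('n) + 1) * (CARD('n) + 2) div 2"
    and "invertible_mat_p p Q"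
    and y_close: "\<And>i. i < p \<Longrightarrow> norm (y i - x) \<le> \<beta> * \<Delta>"
    and interp: "\<And>i. i < p \<Longrightarrow> (\<Sum>k<p. Q i k * quad_coeffs \<Delta> c g H ! k) = f (y i)"
    and "z \<in> cball x \<Delta>"
  shows "\<bar>c + g \<bullet> (z - x) + 1/2 * ((z - x) \<bullet> (H *v (z - x))) - f z\<bar> \<le> (\<kappa> + L / 6) * \<Delta> ^ 3"
    and "norm (g + H *v (z - x) - Df z) \<le> (\<kappa> + L / 2) * \<Delta>\<^sup>2"
    and "opnorm (H - Hf z) \<le> (\<kappa> + L) * \<Delta>"
proof -
  interpret lipschitz_hessian f Df Hf L by fact
  have inv: "is_inverse_mat p Q (inv_mat_p p Q)"
    using \<open>invertible_mat_p p Q\<close> unfolding invertible_mat_p_def inv_mat_p_def by (rule someI_ex)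
  define \<epsilon> where "\<epsilon> = norm_inf_p p (inv_mat_p p Q) * L * \<beta> ^ 3 / 6"
  have errors: "\<bar>c - f x\<bar> \<le> \<epsilon> * \<Delta> ^ 3"
      "\<And>j. \<bar>(g - Df x) $ j\<bar> \<le> \<epsilon> * \<Delta>\<^sup>2" "\<And>i j. \<bar>(H - Hf x) $ i $ j\<bar> \<le> \<epsilon> * \<Delta>"
    unfolding \<epsilon>_def
    using interpolation_coeffs_error[where y = y, OF lh \<open>0 < \<Delta>\<close> H_sym p_def inv[unfolded Q_def] y_close
        interp[unfolded Q_def]]
    by (auto simp: Q_def)
  have "0 \<le> \<epsilon>"
    using order_trans[OF abs_ge_zero errors(3)] \<open>0 < \<Delta>\<close> by (simp add: zero_le_mult_iff)
  have "norm (z - x) \<le> \<Delta>"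
    using \<open>z \<in> cball x \<Delta>\<close> by (simp add: dist_norm norm_minus_commute)
  note model_errors = quadratic_model_value_error[OF errors this]
    quadratic_model_gradient_error[OF errors this] quadratic_model_hessian_error[OF errors this]
  have const: "(1 + sqrt CARD('n) + CARD('n) / 2) * \<epsilon> \<le> \<kappa>"
    "(sqrt CARD('n) + CARD('n)) * \<epsilon> \<le> \<kappa>" "CARD('n) * \<epsilon> \<le> \<kappa>"
    unfolding \<kappa>_def Q_def[symmetric] \<epsilon>_def[symmetric] using \<open>0 \<le> \<epsilon>\<close>
    by (intro mult_right_mono; simp)+
  have "\<bar>c + g \<bullet> (z - x) + 1/2 * ((z - x) \<bullet> (H *v (z - x))) - f z\<bar>
      \<le> ((1 + sqrt CARD('n) + CARD('n) / 2) * \<epsilon> + L / 6) * \<Delta> ^ 3"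
    using model_errors(1) by simp
  also have "\<dots> \<le> (\<kappa> + L / 6) * \<Delta> ^ 3"
    using const(1) \<open>0 < \<Delta>\<close> by (intro mult_right_mono) simp_all
  finally show "\<bar>c + g \<bullet> (z - x) + 1/2 * ((z - x) \<bullet> (H *v (z - x))) - f z\<bar> \<le> (\<kappa> + L / 6) * \<Delta> ^ 3" .
  have "norm (g + H *v (z - x) - Df z) \<le> ((sqrt CARD('n) + CARD('n)) * \<epsilon> + L / 2) * \<Delta>\<^sup>2"
    using model_errors(2) by simp
  also have "\<dots> \<le> (\<kappa> + L / 2) * \<Delta>\<^sup>2"
    using const(2) by (intro mult_right_mono) simp_all
  finally show "norm (g + H *v (z - x) - Df z) \<le> (\<kappa> + L / 2) * \<Delta>\<^sup>2" .
  have "opnorm (H - Hf z) \<le> (CARD('n) * \<epsilon> + L) * \<Delta>"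
    using model_errors(3) by simp
  also have "\<dots> \<le> (\<kappa> + L) * \<Delta>"
    using const(3) \<open>0 < \<Delta>\<close> by (intro mult_right_mono) simp_all
  finally show "opnorm (H - Hf z) \<le> (\<kappa> + L) * \<Delta>" .
qed

theorem theorem5p5:
  fixes f :: "(real, 'n::{finite,linorder}) vec \<Rightarrow> real"
    and Df :: "(real, 'n) vec \<Rightarrow> (real, 'n) vec"
    and Hf :: "(real, 'n) vec \<Rightarrow> ((real, 'n) vec, 'n) vec"
    and L :: real
    and x :: "(real, 'n) vec" and \<Delta> \<beta> :: real and p :: nat
    and y :: "nat \<Rightarrow> (real, 'n) vec"
    and c :: real and g :: "(real, 'n) vec" and H :: "((real, 'n) vec, 'n) vec"
  assumes bdd_below: "\<exists>b. \<forall>z. b \<le> f z"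
    and grad: "\<And>z. (f has_derivative (\<lambda>h. Df z \<bullet> h)) (at z)"
    and hess: "\<And>z. (Df has_derivative (\<lambda>h. Hf z *v h)) (at z)"
    and hess_cont: "continuous_on UNIV Hf"
    and hess_lip: "\<And>u v. opnorm (Hf u - Hf v) \<le> L * norm (u - v)"
    and Delta_pos: "\<Delta> > 0"
    and p_def: "p = (CARD('n) + 1) * (CARD('n) + 2) div 2"
    and beta_pos: "\<beta> > 0"
    and y_close: "\<And>i. i < p \<Longrightarrow> norm (y i - x) \<le> \<beta> * \<Delta>"
    and Q_inv: "invertible_mat_p p (\<lambda>i k. phi ((1 / \<Delta>) *\<^sub>R (y i - x)) ! k)"
    and H_sym: "transpose H = H"
    and interp: "\<And>i. i < p \<Longrightarrow>
        (\<Sum>k<p. phi ((1 / \<Delta>) *\<^sub>R (y i - x)) ! k *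
           (([c] @ map (\<lambda>j. \<Delta> * g $ j) coords @ map (\<lambda>h. \<Delta>\<^sup>2 * h) (upper H)) ! k))
        = f (y i)"
  shows "let m = (\<lambda>z. c + g \<bullet> (z - x) + (1/2) * ((z - x) \<bullet> (H *v (z - x))));
             A = L * (real CARD('n) + sqrt (real CARD('n)) + 3/2) * \<beta> ^ 3
                   * norm_inf_p p (inv_mat_p p (\<lambda>i k. phi ((1 / \<Delta>) *\<^sub>R (y i - x)) ! k));
             kmf = A / 6 + L / 6;
             kmg = 17 / 3 * A + L / 2;
             kmh = 4 * A + L
         in \<forall>z \<in> cball x \<Delta>.
              \<bar>m z - f z\<bar> \<le> kmf * \<Delta> ^ 3 \<and>
              norm ((g + H *v (z - x)) - Df z) \<le> kmg * \<Delta> ^ 2 \<and>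
              opnorm (H - Hf z) \<le> kmh * \<Delta>"
proof -
  have lh: "lipschitz_hessian f Df Hf L"
    using grad hess hess_lip by unfold_locales
  define \<kappa> where "\<kappa> = (CARD('n) + sqrt CARD('n) + 3/2)
    * (norm_inf_p p (inv_mat_p p (\<lambda>i k. phi ((1 / \<Delta>) *\<^sub>R (y i - x)) ! k)) * L * \<beta> ^ 3 / 6)"
  have "(\<Sum>k<p. phi ((1 / \<Delta>) *\<^sub>R (y i - x)) ! k * quad_coeffs \<Delta> c g H ! k) = f (y i)" if "i < p" for i
    using interp[OF that] by (simp add: quad_coeffs_def)
  then have bounds:
    "\<bar>c + g \<bullet> (z - x) + 1/2 * ((z - x) \<bullet> (H *v (z - x))) - f z\<bar> \<le> (\<kappa> + L / 6) * \<Delta> ^ 3"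
    "norm (g + H *v (z - x) - Df z) \<le> (\<kappa> + L / 2) * \<Delta>\<^sup>2"
    "opnorm (H - Hf z) \<le> (\<kappa> + L) * \<Delta>"
    if "z \<in> cball x \<Delta>" for z
    using interpolation_model_error[where y = y and c = c and g = g and z = z,
        OF lh Delta_pos H_sym p_def Q_inv y_close, folded \<kappa>_def] that
    by simp_all
  have "0 \<le> \<kappa>"
    unfolding \<kappa>_def using lipschitz_hessian.lipschitz_const_nonneg[OF lh] beta_pos norm_inf_p_nonneg[of p]
    by (simp add: p_def)
  have A_eq: "L * (CARD('n) + sqrt CARD('n) + 3/2) * \<beta> ^ 3
      * norm_inf_p p (inv_mat_p p (\<lambda>i k. phi ((1 / \<Delta>) *\<^sub>R (y i - x)) ! k)) = 6 * \<kappa>"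
    by (simp add: \<kappa>_def)
  show ?thesis
    unfolding Let_def A_eq
  proof (intro ballI conjI)
    fix z assume "z \<in> cball x \<Delta>"
    then show "\<bar>c + g \<bullet> (z - x) + 1/2 * ((z - x) \<bullet> (H *v (z - x))) - f z\<bar> \<le> (6 * \<kappa> / 6 + L / 6) * \<Delta> ^ 3"
      using bounds(1) by simp
    show "norm (g + H *v (z - x) - Df z) \<le> (17 / 3 * (6 * \<kappa>) + L / 2) * \<Delta>\<^sup>2"
      using bounds(2)[OF \<open>z \<in> cball x \<Delta>\<close>] by (rule order_trans)
        (use \<open>0 \<le> \<kappa>\<close> in \<open>intro mult_right_mono, simp_all\<close>)
    show "opnorm (H - Hf z) \<le> (4 * (6 * \<kappa>) + L) * \<Delta>"
      using bounds(3)[OF \<open>z \<in> cball x \<Delta>\<close>] by (rule order_trans)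
        (use \<open>0 \<le> \<kappa>\<close> Delta_pos in \<open>intro mult_right_mono, simp_all\<close>)
  qed
qed

end
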